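(* Let $N=(S,T,F,M_0,\ell)$ and $N'=(S',T',F',M'_0,\ell')$ be two Petri nets, $N'$ being plain. Suppose there is a relation $\mathcal B\subseteq(\mathbb N^S\times\mathbb N^T)\times(\mathbb N^{S'}\times\mathbb N^{T'})$ such that (a) $(M_0,\emptyset)\mathcal B(M'_0,\emptyset)$; (b) if $(M_1,U_1)\mathcal B(M_1',U_1')$ and $(M_1,U_1)\xrightarrow{\tau}(M_2,U_2)$ then $(M_2,U_2)\mathcal B(M_1',U_1')$; (c) if $(M_1,U_1)\mathcal B(M_1',U_1')$ and $(M_1,U_1)\xrightarrow{\eta}(M_2,U_2)$ for some $\eta\in\mathrm{Act}^\pm$ then there is $(M_2',U_2')$ with $(M_1',U_1')\xrightarrow{\eta}(M_2',U_2')$ and $(M_2,U_2)\mathcal B(M_2',U_2')$; (d) if $(M_1,U_1)\mathcal B(M_1',U_1')$ and $(M_1',U_1')\xrightarrow{\eta}$ with $\eta\in\mathrm{Act}^\pm$ then $(M_1,U_1)\xrightarrow{\eta}$ or $(M_1,U_1)\xrightarrow{\tau}$; (e) there is no infinite sequence $(M,U)\xrightarrow{\tau}(M_1,U_1)\xrightarrow{\tau}(M_2,U_2)\xrightarrow{\tau}\cdots$ with $(M,U)\mathcal B(M',U')$ for some $(M',U')$. Then $\mathcal B$ is a branching split bisimulation with explicit divergence, and $N\approx^\Delta_{bSTb}N'$.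
   Context: Fix visible actions $\mathrm{Act}$ and $\tau\notin\mathrm{Act}$. A Petri net $(S,T,F,M_0,\ell)$ has disjoint $S,T$, $F:(S\times T)\cup(T\times S)\to\mathbb N$, $M_0\in\mathbb N^S$, $\ell:T\to\mathrm{Act}\cup\{\tau\}$; ${}^\bullet t(s)=F(s,t)$, $t^\bullet(s)=F(t,s)$; $M[t\rangle M'$ iff ${}^\bullet t\le M$ and $M'=M-{}^\bullet t+t^\bullet$. Plain: $\ell$ injective and never $\tau$. Split markings are pairs $(M,U)\in\mathbb N^S\times\mathbb N^T$ with transitions labelled in $\mathrm{Act}^\pm=\{a^+,a^-\mid a\in\mathrm{Act}\}$ or $\tau$: $(M,U)\xrightarrow{a^+}(M-{}^\bullet t,U+\{t\})$ iff $\ell(t)=a$ and $M[t\rangle$; $(M,U)\xrightarrow{a^-}(M+t^\bullet,U-\{t\})$ iff $t\in U$ and $\ell(t)=a$; $(M,U)\xrightarrow{\tau}(M',U)$ iff $M[t\rangle M'$ for some $t$ with $\ell(t)=\tau$. The split LTS of a net has initial state $(M_0,\emptyset)$. A branching split bisimulation with explicit divergence is a relation $\mathcal B$ between split markings of the two nets relating the initial ones such that: if $\mathfrak M_1\mathcal B\mathfrak M_2$ and $\mathfrak M_1\xrightarrow{\alpha}\mathfrak M_1'$ then $\mathfrak M_2\Rightarrow\mathfrak M_2^\dagger\xrightarrow{(\alpha)}\mathfrak M_2'$ with $\mathfrak M_1\mathcal B\mathfrak M_2^\dagger$, $\mathfrak M_1'\mathcal B\mathfrak M_2'$ ($\Rightarrow$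 reflexive transitive closure of $\xrightarrow{\tau}$; $\xrightarrow{(\alpha)}$ is $\xrightarrow{\alpha}$ or, if $\alpha=\tau$, equality), and symmetrically; and if $\mathfrak M_1\mathcal B\mathfrak M_2$ and an infinite $\tau$-sequence from $\mathfrak M_1$ has all states related to $\mathfrak M_2$ then there is an infinite $\tau$-sequence from $\mathfrak M_2$ with all pairs of states related, and symmetrically. $N\approx^\Delta_{bSTb}N'$ is defined likewise on ST-markings $(M,U)\in\mathbb N^S\times T^*$ with initial state $(M_0,\varepsilon)$ and transitions $(M,U)\xrightarrow{a^+}(M-{}^\bullet t,Ut)$ iff $\ell(t)=a\in\mathrm{Act}$ and $M[t\rangle$; $(M,U)\xrightarrow{a^{-n}}(M+t^\bullet,U^{-n})$ iff the $n$-th element $t$ of $U$ has label $a$ ($U^{-n}$: with it removed); $(M,U)\xrightarrow{\tau}(M',U)$ iff $M[t\rangle M'$ with $\ell(t)=\tau$. *)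

theory Defs
  imports Main
begin

text \<open>Places are the elements of type 's, transitions those of type 't
  (so S and T are disjoint). The flow function F is split into
  pre t s = F(s,t) and post t s = F(t,s). Labels: None stands for tau,
  Some a for a visible action a.\<close>

record ('s, 't, 'a) pnet =
  pre  :: "'t \<Rightarrow> 's \<Rightarrow> nat"
  post :: "'t \<Rightarrow> 's \<Rightarrow> nat"
  m0   :: "'s \<Rightarrow> nat"
  lab  :: "'t \<Rightarrow> 'a option"

definition plain :: "('s, 't, 'a) pnet \<Rightarrow> bool" where
  "plain N \<longleftrightarrow> inj (lab N) \<and> (\<forall>t. lab N t \<noteq> None)"

definition enabled :: "('s, 't, 'a) pnet \<Rightarrow> ('s \<Rightarrow> nat) \<Rightarrow> 't \<Rightarrow> bool" where
  "enabled N M t \<longleftrightarrow> pre N t \<le> M"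

definition fire :: "('s, 't, 'a) pnet \<Rightarrow> ('s \<Rightarrow> nat) \<Rightarrow> 't \<Rightarrow> ('s \<Rightarrow> nat)" where
  "fire N M t = (\<lambda>s. M s - pre N t s + post N t s)"

datatype 'a slab = SPlus 'a | SMinus 'a | STau

inductive split_step :: "('s, 't, 'a) pnet \<Rightarrow> ('s \<Rightarrow> nat) \<times> ('t \<Rightarrow> nat)
    \<Rightarrow> 'a slab \<Rightarrow> ('s \<Rightarrow> nat) \<times> ('t \<Rightarrow> nat) \<Rightarrow> bool" for N where
  plus: "lab N t = Some a \<Longrightarrow> enabled N M t \<Longrightarrow>
     split_step N (M, U) (SPlus a) (\<lambda>s. M s - pre N t s, U(t := U t + 1))"
| minus: "U t > 0 \<Longrightarrow> lab N t = Some a \<Longrightarrow>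
     split_step N (M, U) (SMinus a) (\<lambda>s. M s + post N t s, U(t := U t - 1))"
| tau: "lab N t = None \<Longrightarrow> enabled N M t \<Longrightarrow>
     split_step N (M, U) STau (fire N M t, U)"

text \<open>ST semantics: labels a+, a^{-n} (n counted from 1), tau.\<close>

datatype 'a stlab = STPlus 'a | STMinus 'a nat | STTauL

inductive st_step :: "('s, 't, 'a) pnet \<Rightarrow> ('s \<Rightarrow> nat) \<times> 't list
    \<Rightarrow> 'a stlab \<Rightarrow> ('s \<Rightarrow> nat) \<times> 't list \<Rightarrow> bool" for N where
  plus: "lab N t = Some a \<Longrightarrow> enabled N M t \<Longrightarrow>
     st_step N (M, U) (STPlus a) (\<lambda>s. M s - pre N t s, U @ [t])"
| minus: "1 \<le> n \<Longrightarrow> n \<le> length U \<Longrightarrow> lab N (U ! (n - 1)) = Some a \<Longrightarrow>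
     st_step N (M, U) (STMinus a n)
        (\<lambda>s. M s + post N (U ! (n - 1)) s, take (n - 1) U @ drop n U)"
| tau: "lab N t = None \<Longrightarrow> enabled N M t \<Longrightarrow>
     st_step N (M, U) STTauL (fire N M t, U)"

text \<open>Generic branching bisimulation with explicit divergence between two LTSs
  (step relations with a common label type and a distinguished tau label).\<close>

definition bb_transfer :: "('p \<Rightarrow> 'l \<Rightarrow> 'p \<Rightarrow> bool) \<Rightarrow> ('q \<Rightarrow> 'l \<Rightarrow> 'q \<Rightarrow> bool)
    \<Rightarrow> 'l \<Rightarrow> ('p \<Rightarrow> 'q \<Rightarrow> bool) \<Rightarrow> bool" where
  "bb_transfer st1 st2 tau B \<longleftrightarrow>
     (\<forall>p q \<alpha> p'. B p q \<and> st1 p \<alpha> p' \<longrightarrow>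
        (\<exists>q1 q'. (\<lambda>x y. st2 x tau y)\<^sup>*\<^sup>* q q1 \<and>
                 (st2 q1 \<alpha> q' \<or> (\<alpha> = tau \<and> q' = q1)) \<and>
                 B p q1 \<and> B p' q'))"

definition bb_div :: "('p \<Rightarrow> 'l \<Rightarrow> 'p \<Rightarrow> bool) \<Rightarrow> ('q \<Rightarrow> 'l \<Rightarrow> 'q \<Rightarrow> bool)
    \<Rightarrow> 'l \<Rightarrow> ('p \<Rightarrow> 'q \<Rightarrow> bool) \<Rightarrow> bool" where
  "bb_div st1 st2 tau B \<longleftrightarrow>
     (\<forall>p q f. B p q \<and> f 0 = p \<and> (\<forall>i. st1 (f i) tau (f (Suc i))) \<and> (\<forall>i. B (f i) q) \<longrightarrow>
        (\<exists>g. g 0 = q \<and> (\<forall>j. st2 (g j) tau (g (Suc j))) \<and> (\<forall>i j. B (f i) (g j))))"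

definition bbisim_div :: "('p \<Rightarrow> 'l \<Rightarrow> 'p \<Rightarrow> bool) \<Rightarrow> ('q \<Rightarrow> 'l \<Rightarrow> 'q \<Rightarrow> bool)
    \<Rightarrow> 'l \<Rightarrow> ('p \<Rightarrow> 'q \<Rightarrow> bool) \<Rightarrow> bool" where
  "bbisim_div st1 st2 tau B \<longleftrightarrow>
     bb_transfer st1 st2 tau B \<and> bb_transfer st2 st1 tau (\<lambda>q p. B p q) \<and>
     bb_div st1 st2 tau B \<and> bb_div st2 st1 tau (\<lambda>q p. B p q)"

definition split_bbisim_div :: "('s, 't, 'a) pnet \<Rightarrow> ('s2, 't2, 'a) pnet
    \<Rightarrow> (('s \<Rightarrow> nat) \<times> ('t \<Rightarrow> nat) \<Rightarrow> ('s2 \<Rightarrow> nat) \<times> ('t2 \<Rightarrow> nat) \<Rightarrow> bool) \<Rightarrow> bool" where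
  "split_bbisim_div N N' B \<longleftrightarrow>
     B (m0 N, \<lambda>_. 0) (m0 N', \<lambda>_. 0) \<and> bbisim_div (split_step N) (split_step N') STau B"

definition bSTb_div_equiv :: "('s, 't, 'a) pnet \<Rightarrow> ('s2, 't2, 'a) pnet \<Rightarrow> bool" where
  "bSTb_div_equiv N N' \<longleftrightarrow>
     (\<exists>B. B (m0 N, []) (m0 N', []) \<and> bbisim_div (st_step N) (st_step N') STTauL B)"

end

theory Submission
  imports Defs
begin

text \<open>Since \<open>N'\<close> is plain, its split LTS is deterministic and has no \<open>\<tau>\<close>-steps.
  Against such a partner the one-sided conditions (b)--(e) already give a branching
  bisimulation with explicit divergence: a visible step of \<open>N'\<close> is answered by letting
  \<open>N\<close> perform \<open>\<tau>\<close>-steps, which stay related by (b) and must stop by (e), until by (d)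
  the step is enabled in \<open>N\<close>; then (c) and determinism of \<open>N'\<close> relate the targets.
  The ST case is the same argument for the relation obtained from \<open>B\<close> by forgetting the
  order of the ongoing transitions (a list becomes its multiset of occurrences), which
  turns ST-steps into split steps.\<close>

locale stuttering_simulation =
  fixes st1 :: "'p \<Rightarrow> 'l \<Rightarrow> 'p \<Rightarrow> bool" and st2 :: "'q \<Rightarrow> 'l \<Rightarrow> 'q \<Rightarrow> bool"
    and tau :: 'l and B :: "'p \<Rightarrow> 'q \<Rightarrow> bool"
  assumes tau_closed: "\<And>p q p'. B p q \<Longrightarrow> st1 p tau p' \<Longrightarrow> B p' q"
    and sim: "\<And>p q p' \<alpha>. B p q \<Longrightarrow> \<alpha> \<noteq> tau \<Longrightarrow> st1 p \<alpha> p' \<Longrightarrow> \<exists>q'. st2 q \<alpha> q' \<and> B p' q'"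
    and enabled: "\<And>p q q' \<alpha>. B p q \<Longrightarrow> \<alpha> \<noteq> tau \<Longrightarrow> st2 q \<alpha> q' \<Longrightarrow>
                    (\<exists>p'. st1 p \<alpha> p') \<or> (\<exists>p'. st1 p tau p')"
    and no_div: "\<not> (\<exists>f q. B (f 0) q \<and> (\<forall>i. st1 (f i) tau (f (Suc i))))"
begin

lemma wf_related_tau_steps: "wf {(p', p). st1 p tau p' \<and> (\<exists>q. B p q)}"
  unfolding wf_iff_no_infinite_down_chain
proof
  assume "\<exists>f. \<forall>i. (f (Suc i), f i) \<in> {(p', p). st1 p tau p' \<and> (\<exists>q. B p q)}"
  then obtain f where "\<forall>i. st1 (f i) tau (f (Suc i))" and "\<exists>q. B (f 0) q"
    by blast
  with no_div show False by blast
qed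

lemma tau_path_to_matching_step:
  assumes "B p q" "\<alpha> \<noteq> tau" "st2 q \<alpha> q'"
  shows "\<exists>p1 p'. (\<lambda>x y. st1 x tau y)\<^sup>*\<^sup>* p p1 \<and> B p1 q \<and> st1 p1 \<alpha> p'"
  using wf_related_tau_steps \<open>B p q\<close>
proof (induction p rule: wf_induct_rule)
  case (less p)
  from enabled[OF \<open>B p q\<close> \<open>\<alpha> \<noteq> tau\<close> \<open>st2 q \<alpha> q'\<close>] show ?case
  proof
    assume "\<exists>p'. st1 p \<alpha> p'"
    with less.prems show ?thesis by blast
  next
    assume "\<exists>p2. st1 p tau p2"
    then obtain p2 where step: "st1 p tau p2" by blast
    with less.prems have "B p2 q" by (rule tau_closed)
    moreover have "(p2, p) \<in> {(p', p). st1 p tau p' \<and> (\<exists>q. B p q)}"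
      using step less.prems by blast
    ultimately obtain p1 p' where "(\<lambda>x y. st1 x tau y)\<^sup>*\<^sup>* p2 p1" "B p1 q" "st1 p1 \<alpha> p'"
      using less.IH by blast
    with step show ?thesis by (meson converse_rtranclp_into_rtranclp)
  qed
qed

lemma bbisim_div:
  assumes no_tau: "\<And>q q'. \<not> st2 q tau q'"
    and det: "\<And>q \<alpha> q1 q2. st2 q \<alpha> q1 \<Longrightarrow> st2 q \<alpha> q2 \<Longrightarrow> q1 = q2"
  shows "bbisim_div st1 st2 tau B"
  unfolding bbisim_div_def
proof (intro conjI)
  show "bb_transfer st1 st2 tau B"
    unfolding bb_transfer_def
  proof (intro allI impI)
    fix p q \<alpha> p'
    assume "B p q \<and> st1 p \<alpha> p'"
    then have "B p q" "st1 p \<alpha> p'" by blast+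
    show "\<exists>q1 q'. (\<lambda>x y. st2 x tau y)\<^sup>*\<^sup>* q q1 \<and> (st2 q1 \<alpha> q' \<or> \<alpha> = tau \<and> q' = q1) \<and>
                  B p q1 \<and> B p' q'"
    proof (cases "\<alpha> = tau")
      case True
      with \<open>B p q\<close> \<open>st1 p \<alpha> p'\<close> have "B p' q" by (blast intro: tau_closed)
      with True \<open>B p q\<close> show ?thesis by blast
    next
      case False
      with sim \<open>B p q\<close> \<open>st1 p \<alpha> p'\<close> obtain q' where "st2 q \<alpha> q'" "B p' q'" by blast
      with \<open>B p q\<close> show ?thesis by blast
    qed
  qed
  show "bb_transfer st2 st1 tau (\<lambda>q p. B p q)"
    unfolding bb_transfer_def
  proof (intro allI impI)
    fix q p \<alpha> q'
    assume "B p q \<and> st2 q \<alpha> q'"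
    then have "B p q" "st2 q \<alpha> q'" "\<alpha> \<noteq> tau" using no_tau by blast+
    then obtain p1 p' where path: "(\<lambda>x y. st1 x tau y)\<^sup>*\<^sup>* p p1" and "B p1 q" "st1 p1 \<alpha> p'"
      using tau_path_to_matching_step by blast
    with sim obtain q2 where "st2 q \<alpha> q2" "B p' q2" using \<open>\<alpha> \<noteq> tau\<close> by blast
    with det \<open>st2 q \<alpha> q'\<close> have "B p' q'" by blast
    with path \<open>B p1 q\<close> \<open>st1 p1 \<alpha> p'\<close>
    show "\<exists>p1 p'. (\<lambda>x y. st1 x tau y)\<^sup>*\<^sup>* p p1 \<and> (st1 p1 \<alpha> p' \<or> \<alpha> = tau \<and> p' = p1) \<and>
                  B p1 q \<and> B p' q'"
      by blast
  qed
  show "bb_div st1 st2 tau B"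
    unfolding bb_div_def
  proof (intro allI impI)
    fix p q f
    assume "B p q \<and> f 0 = p \<and> (\<forall>i. st1 (f i) tau (f (Suc i))) \<and> (\<forall>i. B (f i) q)"
    with no_div have False by blast
    then show "\<exists>g. g 0 = q \<and> (\<forall>j. st2 (g j) tau (g (Suc j))) \<and> (\<forall>i j. B (f i) (g j))" ..
  qed
  show "bb_div st2 st1 tau (\<lambda>q p. B p q)"
    unfolding bb_div_def
  proof (intro allI impI)
    fix q p f
    assume "B p q \<and> f 0 = q \<and> (\<forall>i. st2 (f i) tau (f (Suc i))) \<and> (\<forall>i. B p (f i))"
    with no_tau have False by blast
    then show "\<exists>g. g 0 = p \<and> (\<forall>j. st1 (g j) tau (g (Suc j))) \<and> (\<forall>i j. B (g j) (f i))" ..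
  qed
qed

end

lemma plain_no_split_tau: "plain N \<Longrightarrow> \<not> split_step N p STau p'"
  by (simp add: plain_def split_step.simps)

lemma plain_no_st_tau: "plain N \<Longrightarrow> \<not> st_step N p STTauL p'"
  by (simp add: plain_def st_step.simps)

lemma plain_split_step_deterministic:
  assumes "plain N" "split_step N p \<alpha> p1" "split_step N p \<alpha> p2"
  shows "p1 = p2"
proof -
  have inj: "lab N t = Some a \<Longrightarrow> lab N t' = Some a \<Longrightarrow> t = t'" for t t' a
    using \<open>plain N\<close> by (metis injD plain_def)
  from assms(2,3) show ?thesis
    by (cases rule: split_step.cases; auto elim!: split_step.cases dest: inj
          simp: plain_no_split_tau[OF \<open>plain N\<close>])
qed

lemma plain_st_step_deterministic:
  assumes "plain N" "st_step N p \<alpha> p1" "st_step N p \<alpha> p2"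
  shows "p1 = p2"
proof -
  have inj: "lab N t = Some a \<Longrightarrow> lab N t' = Some a \<Longrightarrow> t = t'" for t t' a
    using \<open>plain N\<close> by (metis injD plain_def)
  from assms(2,3) show ?thesis
    by (cases rule: st_step.cases; auto elim!: st_step.cases dest: inj
          simp: plain_no_st_tau[OF \<open>plain N\<close>])
qed

lemma count_list_Nil_fun: "count_list [] = (\<lambda>_. 0)"
  by (simp add: fun_eq_iff)

lemma count_list_snoc: "count_list (U @ [t]) = (count_list U)(t := count_list U t + 1)"
  by (auto simp: fun_eq_iff)

lemma count_list_remove_nth:
  assumes "1 \<le> n" "n \<le> length U"
  shows "count_list (take (n - 1) U @ drop n U) =
           (count_list U)(U ! (n - 1) := count_list U (U ! (n - 1)) - 1)"
    and "count_list U (U ! (n - 1)) > 0"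
proof -
  have U: "U = take (n - 1) U @ U ! (n - 1) # drop n U"
    using id_take_nth_drop[of "n - 1" U] assms by simp
  have "count_list U x = count_list (take (n - 1) U @ drop n U) x + (if x = U ! (n - 1) then 1 else 0)"
    for x
    by (subst U) simp
  then show "count_list (take (n - 1) U @ drop n U) =
               (count_list U)(U ! (n - 1) := count_list U (U ! (n - 1)) - 1)"
    and "count_list U (U ! (n - 1)) > 0"
    by (auto simp: fun_eq_iff)
qed

fun split_label :: "'a stlab \<Rightarrow> 'a slab" where
  "split_label (STPlus a) = SPlus a"
| "split_label (STMinus a n) = SMinus a"
| "split_label STTauL = STau"

lemma split_label_eq_STau_iff [simp]: "split_label \<alpha> = STau \<longleftrightarrow> \<alpha> = STTauL"
  by (cases \<alpha>) auto

lemma st_step_imp_split_step: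
  assumes "st_step N p \<alpha> p'"
  shows "split_step N (apsnd count_list p) (split_label \<alpha>) (apsnd count_list p')"
  using assms
proof cases
  case (plus t a M U)
  then show ?thesis
    using split_step.plus[of N t a M "count_list U"] by (simp add: count_list_snoc)
next
  case (minus n U a M)
  then show ?thesis
    using split_step.minus[of "count_list U" "U ! (n - 1)" N a M] count_list_remove_nth[of n U]
    by simp
next
  case (tau t M U)
  then show ?thesis
    by (simp add: split_step.tau)
qed

lemma st_tau_of_split_tau:
  assumes "split_step N (apsnd count_list p) STau p2"
  shows "\<exists>p'. st_step N p STTauL p'"
  using assms by (cases p) (auto elim!: split_step.cases intro: st_step.tau)

lemma st_step_of_split_step:
  assumes "st_step N' q \<alpha> q'" "map (lab N') (snd q) = map (lab N) (snd p)"
    and "split_step N (apsnd count_list p) (split_label \<alpha>) p2"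
  shows "\<exists>p'. st_step N p \<alpha> p'"
proof -
  obtain M U where p: "p = (M, U)" by fastforce
  from assms(1) show ?thesis
  proof cases
    case (plus t' a M' U')
    with assms(3) p show ?thesis
      by (auto elim!: split_step.cases intro: st_step.plus)
  next
    case (minus n U' a M')
    then have "length U = length U'" "lab N (U ! (n - 1)) = Some a"
      using assms(2) p by (metis length_map snd_conv, metis nth_map length_map snd_conv
          diff_less less_le_trans zero_less_one)
    with minus p show ?thesis
      using st_step.minus[of n U N a M] by auto
  next
    case tau
    with assms(3) show ?thesis
      using st_tau_of_split_tau by simp
  qed
qed

lemma st_steps_preserve_label_agreement:
  assumes "st_step N p \<alpha> p'" "st_step N' q \<alpha> q'"
    and "map (lab N) (snd p) = map (lab N') (snd q)"
  shows "map (lab N) (snd p') = map (lab N') (snd q')"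
  using assms(1)
proof cases
  case (plus t a M U)
  with assms(2) obtain t' where "lab N' t' = Some a" "snd q' = snd q @ [t']"
    by (auto elim: st_step.cases)
  with plus assms(3) show ?thesis by simp
next
  case (minus n U a M)
  with assms(2) have "snd q' = take (n - 1) (snd q) @ drop n (snd q)"
    by (auto elim: st_step.cases)
  with minus assms(3) show ?thesis
    by (simp add: take_map[symmetric] drop_map[symmetric])
next
  case tau
  with assms(2) have "snd q' = snd q"
    by (auto elim: st_step.cases)
  with tau assms(3) show ?thesis by simp
qed

text \<open>Position-wise agreement of the labels of the ongoing transitions makes the index \<open>n\<close>
  of an action \<open>a\<^sup>-\<^sup>n\<close> refer to corresponding transitions in both nets.\<close>

definition st_lift :: "('s, 't, 'a) pnet \<Rightarrow> ('s2, 't2, 'a) pnet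
    \<Rightarrow> (('s \<Rightarrow> nat) \<times> ('t \<Rightarrow> nat) \<Rightarrow> ('s2 \<Rightarrow> nat) \<times> ('t2 \<Rightarrow> nat) \<Rightarrow> bool)
    \<Rightarrow> ('s \<Rightarrow> nat) \<times> 't list \<Rightarrow> ('s2 \<Rightarrow> nat) \<times> 't2 list \<Rightarrow> bool" where
  "st_lift N N' B p q \<longleftrightarrow>
     B (apsnd count_list p) (apsnd count_list q) \<and> map (lab N) (snd p) = map (lab N') (snd q)"

lemma st_lift_tau_closed:
  assumes "\<And>p q p'. B p q \<Longrightarrow> split_step N p STau p' \<Longrightarrow> B p' q"
    and "st_lift N N' B p q" "st_step N p STTauL p'"
  shows "st_lift N N' B p' q"
proof -
  have "snd p' = snd p"
    using assms(3) by cases auto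
  with assms st_step_imp_split_step[OF assms(3)] show ?thesis
    unfolding st_lift_def by (metis split_label.simps(3))
qed

lemma st_lift_simulation:
  assumes "plain N'"
    and sim: "\<And>p q p' \<eta>. B p q \<Longrightarrow> \<eta> \<noteq> STau \<Longrightarrow> split_step N p \<eta> p' \<Longrightarrow>
                \<exists>q'. split_step N' q \<eta> q' \<and> B p' q'"
    and rel: "st_lift N N' B p q" and "\<alpha> \<noteq> STTauL" and step: "st_step N p \<alpha> p'"
  shows "\<exists>q'. st_step N' q \<alpha> q' \<and> st_lift N N' B p' q'"
proof -
  from rel have B: "B (apsnd count_list p) (apsnd count_list q)"
    and labels: "map (lab N) (snd p) = map (lab N') (snd q)"
    unfolding st_lift_def by auto
  obtain q2 where split': "split_step N' (apsnd count_list q) (split_label \<alpha>) q2"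
    and B': "B (apsnd count_list p') q2"
    using sim[OF B _ st_step_imp_split_step[OF step]] \<open>\<alpha> \<noteq> STTauL\<close> by auto
  obtain q' where step': "st_step N' q \<alpha> q'"
    using st_step_of_split_step[OF step labels split'] by blast
  have "apsnd count_list q' = q2"
    using plain_split_step_deterministic[OF \<open>plain N'\<close> st_step_imp_split_step[OF step'] split'] .
  with B' st_steps_preserve_label_agreement[OF step step' labels] step' show ?thesis
    unfolding st_lift_def by blast
qed

lemma st_lift_enabled:
  assumes enabled: "\<And>p q q' \<eta>. B p q \<Longrightarrow> \<eta> \<noteq> STau \<Longrightarrow> split_step N' q \<eta> q' \<Longrightarrow>
                       (\<exists>p'. split_step N p \<eta> p') \<or> (\<exists>p'. split_step N p STau p')"
    and rel: "st_lift N N' B p q" and "\<alpha> \<noteq> STTauL" and step': "st_step N' q \<alpha> q'"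
  shows "(\<exists>p'. st_step N p \<alpha> p') \<or> (\<exists>p'. st_step N p STTauL p')"
proof -
  from rel have B: "B (apsnd count_list p) (apsnd count_list q)"
    and labels: "map (lab N') (snd q) = map (lab N) (snd p)"
    unfolding st_lift_def by auto
  from enabled[OF B _ st_step_imp_split_step[OF step']] \<open>\<alpha> \<noteq> STTauL\<close>
  consider p2 where "split_step N (apsnd count_list p) (split_label \<alpha>) p2"
    | p2 where "split_step N (apsnd count_list p) STau p2"
    by auto
  then show ?thesis
    by cases (blast dest: st_step_of_split_step[OF step' labels] st_tau_of_split_tau)+
qed

lemma st_lift_no_divergence:
  assumes "\<not> (\<exists>f q. B (f 0) q \<and> (\<forall>i. split_step N (f i) STau (f (Suc i))))"
  shows "\<not> (\<exists>f q. st_lift N N' B (f 0) q \<and> (\<forall>i. st_step N (f i) STTauL (f (Suc i))))"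
proof
  assume "\<exists>f q. st_lift N N' B (f 0) q \<and> (\<forall>i. st_step N (f i) STTauL (f (Suc i)))"
  then obtain f q where "st_lift N N' B (f 0) q" "\<forall>i. st_step N (f i) STTauL (f (Suc i))"
    by blast
  then have "B ((apsnd count_list \<circ> f) 0) (apsnd count_list q)"
    and "\<forall>i. split_step N ((apsnd count_list \<circ> f) i) STau ((apsnd count_list \<circ> f) (Suc i))"
    using st_step_imp_split_step by (fastforce simp: st_lift_def)+
  with assms show False by blast
qed

lemma stuttering_simulation_st_lift:
  assumes "plain N'" and "stuttering_simulation (split_step N) (split_step N') STau B"
  shows "stuttering_simulation (st_step N) (st_step N') STTauL (st_lift N N' B)"
proof -
  interpret split: stuttering_simulation "split_step N" "split_step N'" STau B
    by fact
  show ?thesis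
  proof
    fix p q p'
    assume "st_lift N N' B p q" "st_step N p STTauL p'"
    with split.tau_closed show "st_lift N N' B p' q"
      by (rule st_lift_tau_closed)
  next
    fix p q p' \<alpha>
    assume "st_lift N N' B p q" "\<alpha> \<noteq> STTauL" "st_step N p \<alpha> p'"
    with \<open>plain N'\<close> split.sim show "\<exists>q'. st_step N' q \<alpha> q' \<and> st_lift N N' B p' q'"
      by (rule st_lift_simulation)
  next
    fix p q q' \<alpha>
    assume "st_lift N N' B p q" "\<alpha> \<noteq> STTauL" "st_step N' q \<alpha> q'"
    with split.enabled show "(\<exists>p'. st_step N p \<alpha> p') \<or> (\<exists>p'. st_step N p STTauL p')"
      by (rule st_lift_enabled)
  next
    from split.no_div
    show "\<not> (\<exists>f q. st_lift N N' B (f 0) q \<and> (\<forall>i. st_step N (f i) STTauL (f (Suc i))))"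
      by (rule st_lift_no_divergence)
  qed
qed

theorem lemma6p3:
  fixes N :: "('s, 't, 'a) pnet" and N' :: "('s2, 't2, 'a) pnet"
    and B :: "('s \<Rightarrow> nat) \<times> ('t \<Rightarrow> nat) \<Rightarrow> ('s2 \<Rightarrow> nat) \<times> ('t2 \<Rightarrow> nat) \<Rightarrow> bool"
  assumes plainN': "plain N'"
    and a: "B (m0 N, \<lambda>_. 0) (m0 N', \<lambda>_. 0)"
    and b: "\<And>p1 p1' p2. B p1 p1' \<Longrightarrow> split_step N p1 STau p2 \<Longrightarrow> B p2 p1'"
    and c: "\<And>p1 p1' p2 \<eta>. B p1 p1' \<Longrightarrow> \<eta> \<noteq> STau \<Longrightarrow> split_step N p1 \<eta> p2 \<Longrightarrow>
              \<exists>p2'. split_step N' p1' \<eta> p2' \<and> B p2 p2'"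
    and d: "\<And>p1 p1' p2' \<eta>. B p1 p1' \<Longrightarrow> \<eta> \<noteq> STau \<Longrightarrow> split_step N' p1' \<eta> p2' \<Longrightarrow>
              (\<exists>p2. split_step N p1 \<eta> p2) \<or> (\<exists>p2. split_step N p1 STau p2)"
    and e: "\<not> (\<exists>f q. B (f 0) q \<and> (\<forall>i. split_step N (f i) STau (f (Suc i))))"
  shows "split_bbisim_div N N' B \<and> bSTb_div_equiv N N'"
proof
  have split: "stuttering_simulation (split_step N) (split_step N') STau B"
    using b c d e by unfold_locales
  moreover have "bbisim_div (split_step N) (split_step N') STau B"
    using split plain_no_split_tau[OF plainN'] plain_split_step_deterministic[OF plainN']
    by (rule stuttering_simulation.bbisim_div)
  ultimately show "split_bbisim_div N N' B"
    unfolding split_bbisim_div_def using a by blast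
  have "bbisim_div (st_step N) (st_step N') STTauL (st_lift N N' B)"
    using stuttering_simulation_st_lift[OF plainN' split] plain_no_st_tau[OF plainN']
      plain_st_step_deterministic[OF plainN']
    by (rule stuttering_simulation.bbisim_div)
  moreover have "st_lift N N' B (m0 N, []) (m0 N', [])"
    using a by (simp add: st_lift_def count_list_Nil_fun)
  ultimately show "bSTb_div_equiv N N'"
    unfolding bSTb_div_equiv_def by blast
qed

end
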